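(* In a sufficiently small neighborhood of $s_0\in\mathbb{R}$, the signed Korányi chord length function $\operatorname{ch}_{\mathcal{H}}$ is a smooth function satisfying $\operatorname{ch}_{\mathcal{H}}'(s)>0$. Moreover, the size of such a neighborhood in $\mathbb{R}$ can be taken uniformly for all $p\in K$.
   Context: $\mathcal{H}=\mathbb{C}\times\mathbb{R}$ is the 3-dimensional Heisenberg group with coordinates $(x,y,u)$, group law $(x,y,u)\cdot(x',y',u')=(x+x',y+y',u+u'+\tfrac12(xy'-x'y))$, horizontal distribution spanned by $X=\partial_x-\tfrac12 y\,\partial_u$, $Y=\partial_y+\tfrac12 x\,\partial_u$ (orthonormal, norm $|\cdot|$). The Korányi distance is $d_{\mathcal{H}}(p,q)=\|p^{-1}q\|_{\mathcal{H}}$ with $\|(x,y,u)\|_{\mathcal{H}}=\sqrt[4]{(x^2+y^2)^2+16u^2}$. Let $K$ be a smooth Legendrian knot (closed, embedded, with horizontal velocity), parametrized by arc length $\gamma$, extended to a periodic map $\gamma\colon\mathbb{R}\to\mathcal{H}$ with period the length of $K$. Fix $p=\gamma(s_0)\in K$. The signed chord length function $\operatorname{ch}_{\mathcal{H}}\colon\mathbb{R}\to\mathbb{R}$ is defined by $\operatorname{ch}_{\mathcal{H}}(s)=d_{\mathcal{H}}(p,\gamma(s))$ for $s>s_0$, $0$ for $s=s_0$, and $-d_{\mathcal{H}}(p,\gamma(s))$ for $s<s_0$. *)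

theory Defs
  imports "HOL-Analysis.Analysis"
begin

type_synonym heis = "real \<times> real \<times> real"

definition hx :: "heis \<Rightarrow> real" where "hx p = fst p"
definition hy :: "heis \<Rightarrow> real" where "hy p = fst (snd p)"
definition hu :: "heis \<Rightarrow> real" where "hu p = snd (snd p)"

definition heis_mult :: "heis \<Rightarrow> heis \<Rightarrow> heis" where
  "heis_mult p q = (hx p + hx q, hy p + hy q,
                    hu p + hu q + (hx p * hy q - hx q * hy p) / 2)"

definition heis_inv :: "heis \<Rightarrow> heis" where
  "heis_inv p = (- hx p, - hy p, - hu p)"

definition koranyi_norm :: "heis \<Rightarrow> real" where
  "koranyi_norm p = ((hx p ^ 2 + hy p ^ 2) ^ 2 + 16 * hu p ^ 2) powr (1/4)"

definition koranyi_dist :: "heis \<Rightarrow> heis \<Rightarrow> real" where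
  "koranyi_dist p q = koranyi_norm (heis_mult (heis_inv p) q)"

definition smooth_on :: "real set \<Rightarrow> (real \<Rightarrow> real) \<Rightarrow> bool" where
  "smooth_on S f \<longleftrightarrow> (\<forall>n. \<forall>x\<in>S. ((deriv ^^ n) f) differentiable (at x))"

definition smooth_curve :: "(real \<Rightarrow> heis) \<Rightarrow> bool" where
  "smooth_curve \<gamma> \<longleftrightarrow> smooth_on UNIV (\<lambda>s. hx (\<gamma> s)) \<and>
     smooth_on UNIV (\<lambda>s. hy (\<gamma> s)) \<and> smooth_on UNIV (\<lambda>s. hu (\<gamma> s))"

text \<open>gamma is the arc-length parametrization, extended L-periodically (L = length of K),
  of a smooth Legendrian knot K: smooth, L-periodic, injective on one period (closed,
  embedded), horizontal velocity (velocity = x' X + y' Y, i.e. u' = (x y' - x' y)/2),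
  and unit horizontal speed.\<close>
definition legendrian_knot_param :: "(real \<Rightarrow> heis) \<Rightarrow> real \<Rightarrow> bool" where
  "legendrian_knot_param \<gamma> L \<longleftrightarrow>
     L > 0 \<and> smooth_curve \<gamma> \<and>
     (\<forall>s. \<gamma> (s + L) = \<gamma> s) \<and>
     inj_on \<gamma> {0..<L} \<and>
     (\<forall>s. deriv (\<lambda>t. hu (\<gamma> t)) s =
            (hx (\<gamma> s) * deriv (\<lambda>t. hy (\<gamma> t)) s
             - deriv (\<lambda>t. hx (\<gamma> t)) s * hy (\<gamma> s)) / 2) \<and>
     (\<forall>s. (deriv (\<lambda>t. hx (\<gamma> t)) s)\<^sup>2 + (deriv (\<lambda>t. hy (\<gamma> t)) s)\<^sup>2 = 1)"

definition chord_H :: "(real \<Rightarrow> heis) \<Rightarrow> real \<Rightarrow> real \<Rightarrow> real" where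
  "chord_H \<gamma> s0 s =
     (if s > s0 then koranyi_dist (\<gamma> s0) (\<gamma> s)
      else if s = s0 then 0
      else - koranyi_dist (\<gamma> s0) (\<gamma> s))"

end

(*
  Translate by p\<inverse> = \<gamma>(s0)\<inverse>. By Hadamard's lemma the horizontal coordinates of p\<inverse>\<gamma>(s)
  are (s - s0) times smooth functions \<alpha>, \<beta> with (\<alpha>, \<beta>)(s0) = (x'(s0), y'(s0)), a unit vector,
  and the Legendrian condition makes the vertical coordinate vanish to second order, so it is
  (s - s0)^2 c(s) with c smooth. Homogeneity of the Koranyi gauge under the dilation
  (x, y, u) \<mapsto> (t x, t y, t^2 u) then gives ch(s) = (s - s0) A(s)^(1/4), where
  A = (\<alpha>^2 + \<beta>^2)^2 + 16 c^2 is smooth with A(s0) = 1, and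
  ch' = A^(-3/4) (A + (s - s0) A' / 4).
  All bounds on \<alpha>, \<beta>, c and their derivatives depend only on a bound M for x'' and y'', which
  exists by periodicity: on |s - s0| < 1/(80 M) one gets A \<ge> 1/4 and |A'| \<le> 80 M, hence ch' > 0,
  uniformly in s0.
*)

theory Submission
  imports Defs "HOL-Library.Periodic_Fun"
begin

section \<open>Smooth real functions\<close>

text \<open>Smoothness is handled through explicit derivatives rather than through \<^const>\<open>deriv\<close>
  as in \<^const>\<open>smooth_on\<close>, which keeps sums, products and compositions easy;
  \<open>C_infinity_on_imp_smooth_on\<close> converts back on open sets.\<close>

fun C_k_on :: "nat \<Rightarrow> real set \<Rightarrow> (real \<Rightarrow> real) \<Rightarrow> bool" where
  "C_k_on 0 S f \<longleftrightarrow> (\<forall>x\<in>S. isCont f x)"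
| "C_k_on (Suc k) S f \<longleftrightarrow>
     (\<exists>f'. (\<forall>x\<in>S. (f has_real_derivative f' x) (at x)) \<and> C_k_on k S f')"

definition C_infinity_on :: "real set \<Rightarrow> (real \<Rightarrow> real) \<Rightarrow> bool" where
  "C_infinity_on S f \<longleftrightarrow> (\<forall>k. C_k_on k S f)"

lemma C_k_onI:
  "(\<And>x. x \<in> S \<Longrightarrow> (f has_real_derivative f' x) (at x)) \<Longrightarrow> C_k_on k S f' \<Longrightarrow> C_k_on (Suc k) S f"
  by auto

lemma C_k_on_SucD: "C_k_on (Suc k) S f \<Longrightarrow> C_k_on k S f"
proof (induction k arbitrary: f)
  case 0
  then show ?case by (auto dest: DERIV_isCont)
next
  case (Suc k)
  then show ?case by (metis C_k_on.simps(2))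
qed

lemma C_k_on_imp_isCont: "C_k_on k S f \<Longrightarrow> x \<in> S \<Longrightarrow> isCont f x"
proof (induction k)
  case (Suc k)
  then show ?case using C_k_on_SucD by blast
qed simp

lemma C_k_on_subset: "C_k_on k S f \<Longrightarrow> T \<subseteq> S \<Longrightarrow> C_k_on k T f"
  by (induction k arbitrary: f) auto

lemma C_k_on_const: "C_k_on k S (\<lambda>x. c)"
proof (induction k arbitrary: c)
  case (Suc k)
  show ?case by (rule C_k_onI[where f'="\<lambda>x. 0"]) (auto intro: Suc)
qed simp

lemma C_k_on_ident: "C_k_on k S (\<lambda>x. x)"
proof (cases k)
  case (Suc j)
  have "C_k_on (Suc j) S (\<lambda>x. x)"
    by (rule C_k_onI[where f'="\<lambda>x. 1"]) (auto intro: C_k_on_const)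
  then show ?thesis using Suc by simp
qed simp

lemma C_k_on_lincomb:
  "C_k_on k S f \<Longrightarrow> C_k_on k S g \<Longrightarrow> C_k_on k S (\<lambda>x. b * f x + c * g x)"
proof (induction k arbitrary: f g)
  case (Suc k)
  then obtain f' g' where
    f': "\<forall>x\<in>S. (f has_real_derivative f' x) (at x)" "C_k_on k S f'" and
    g': "\<forall>x\<in>S. (g has_real_derivative g' x) (at x)" "C_k_on k S g'"
    by auto
  show ?case
    by (rule C_k_onI[where f'="\<lambda>x. b * f' x + c * g' x"])
       (use f' g' Suc.IH in \<open>auto intro!: derivative_eq_intros\<close>)
qed auto

lemma C_k_on_mult:
  "C_k_on k S f \<Longrightarrow> C_k_on k S g \<Longrightarrow> C_k_on k S (\<lambda>x. f x * g x)"
proof (induction k arbitrary: f g)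
  case (Suc k)
  then obtain f' g' where
    f': "\<forall>x\<in>S. (f has_real_derivative f' x) (at x)" "C_k_on k S f'" and
    g': "\<forall>x\<in>S. (g has_real_derivative g' x) (at x)" "C_k_on k S g'"
    by auto
  have fg: "C_k_on k S f" "C_k_on k S g"
    using Suc.prems C_k_on_SucD by blast+
  have "C_k_on k S (\<lambda>x. 1 * (f' x * g x) + 1 * (f x * g' x))"
    by (intro C_k_on_lincomb Suc.IH f'(2) g'(2) fg)
  then show ?case
    by (intro C_k_onI[where f'="\<lambda>x. f' x * g x + f x * g' x"])
       (use f' g' in \<open>auto intro!: derivative_eq_intros\<close>)
qed auto

lemma C_k_on_compose:
  "C_k_on k T g \<Longrightarrow> C_k_on k S f \<Longrightarrow> f ` S \<subseteq> T \<Longrightarrow> C_k_on k S (\<lambda>x. g (f x))"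
proof (induction k arbitrary: f g)
  case 0
  show ?case
  proof (simp, intro ballI)
    fix x assume "x \<in> S"
    then show "isCont (\<lambda>x. g (f x)) x"
      using 0 isCont_o2[where f=f and g=g and a=x] by auto
  qed
next
  case (Suc k)
  then obtain f' g' where
    f': "\<forall>x\<in>S. (f has_real_derivative f' x) (at x)" "C_k_on k S f'" and
    g': "\<forall>x\<in>T. (g has_real_derivative g' x) (at x)" "C_k_on k T g'"
    by auto
  have "C_k_on k S f"
    using Suc.prems(2) C_k_on_SucD by blast
  then have "C_k_on k S (\<lambda>x. g' (f x) * f' x)"
    by (intro C_k_on_mult Suc.IH[OF g'(2) _ Suc.prems(3)] f'(2))
  moreover have "((\<lambda>x. g (f x)) has_real_derivative g' (f x) * f' x) (at x)" if "x \<in> S" for x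
    using that f' g' Suc.prems(3) by (metis DERIV_chain2 image_subset_iff)
  ultimately show ?case by (intro C_k_onI)
qed

lemma C_k_on_powr: "C_k_on k {0<..} (\<lambda>x. c * x powr r)"
proof (induction k arbitrary: c r)
  case (Suc k)
  show ?case
    by (rule C_k_onI[where f'="\<lambda>x. (c * r) * x powr (r - 1)"])
       (use Suc in \<open>auto intro!: derivative_eq_intros\<close>)
qed (auto intro!: DERIV_isCont derivative_eq_intros)

lemma C_k_on_cong:
  assumes "open S" "\<And>x. x \<in> S \<Longrightarrow> f x = g x" "C_k_on k S f"
  shows "C_k_on k S g"
proof (cases k)
  case 0
  then show ?thesis
  proof (simp, intro ballI)
    fix x assume "x \<in> S"
    then have "eventually (\<lambda>y. y \<in> S) (nhds x)"
      by (rule eventually_nhds_in_open[OF assms(1)])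
    then have "eventually (\<lambda>y. f y = g y) (nhds x)"
      by (rule eventually_mono) (use assms(2) in simp)
    then show "isCont g x"
      using isCont_cong[of f g x] \<open>x \<in> S\<close> 0 assms(3) by simp
  qed
next
  case (Suc j)
  then obtain f' where "\<forall>x\<in>S. (f has_real_derivative f' x) (at x)" "C_k_on j S f'"
    using assms by auto
  then show ?thesis
    using Suc assms by (auto intro: has_field_derivative_transform_within_open)
qed

lemma C_k_on_deriv:
  assumes "open S" "C_k_on (Suc k) S f"
  shows "C_k_on k S (deriv f)"
proof -
  obtain f' where f': "\<forall>x\<in>S. (f has_real_derivative f' x) (at x)" "C_k_on k S f'"
    using assms(2) by auto
  then have "x \<in> S \<Longrightarrow> f' x = deriv f x" for x
    by (metis DERIV_imp_deriv)
  then show ?thesis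
    using C_k_on_cong[OF assms(1) _ f'(2)] by blast
qed

lemma C_k_on_higher_deriv:
  "open S \<Longrightarrow> C_k_on (n + k) S f \<Longrightarrow> C_k_on k S ((deriv ^^ n) f)"
proof (induction n arbitrary: k)
  case (Suc n)
  then have "C_k_on (Suc k) S ((deriv ^^ n) f)"
    by (metis add_Suc_shift)
  then show ?case
    using Suc.prems(1) by (simp add: C_k_on_deriv)
qed simp

lemma smooth_on_UNIV_higher_deriv_has_derivative:
  "smooth_on UNIV f \<Longrightarrow> ((deriv ^^ n) f has_real_derivative (deriv ^^ Suc n) f s) (at s)"
  by (simp add: smooth_on_def DERIV_deriv_iff_real_differentiable)

lemma smooth_on_UNIV_imp_C_k_on_higher_deriv:
  assumes "smooth_on UNIV f"
  shows "C_k_on k UNIV ((deriv ^^ n) f)"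
proof (induction k arbitrary: n)
  case 0
  then show ?case
    using assms by (auto simp: smooth_on_def intro: differentiable_imp_continuous_within)
next
  case (Suc k)
  then show ?case
    using smooth_on_UNIV_higher_deriv_has_derivative[OF assms, of n] Suc.IH[of "Suc n"]
    by (intro C_k_onI[where f'="(deriv ^^ Suc n) f"]) auto
qed

named_theorems C_infinity_intros

lemma C_infinity_on_const [C_infinity_intros]: "C_infinity_on S (\<lambda>x. c)"
  by (simp add: C_infinity_on_def C_k_on_const)

lemma C_infinity_on_ident [C_infinity_intros]: "C_infinity_on S (\<lambda>x. x)"
  by (simp add: C_infinity_on_def C_k_on_ident)

lemma C_infinity_on_add [C_infinity_intros]:
  "C_infinity_on S f \<Longrightarrow> C_infinity_on S g \<Longrightarrow> C_infinity_on S (\<lambda>x. f x + g x)"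
  using C_k_on_lincomb[of _ S f g 1 1] by (simp add: C_infinity_on_def)

lemma C_infinity_on_diff [C_infinity_intros]:
  "C_infinity_on S f \<Longrightarrow> C_infinity_on S g \<Longrightarrow> C_infinity_on S (\<lambda>x. f x - g x)"
  using C_k_on_lincomb[of _ S f g 1 "-1"] by (simp add: C_infinity_on_def)

lemma C_infinity_on_divide_const [C_infinity_intros]:
  "C_infinity_on S f \<Longrightarrow> C_infinity_on S (\<lambda>x. f x / c)"
  using C_k_on_lincomb[of _ S f f "1 / c" 0] by (simp add: C_infinity_on_def)

lemma C_infinity_on_mult [C_infinity_intros]:
  "C_infinity_on S f \<Longrightarrow> C_infinity_on S g \<Longrightarrow> C_infinity_on S (\<lambda>x. f x * g x)"
  by (simp add: C_infinity_on_def C_k_on_mult)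

lemma C_infinity_on_power [C_infinity_intros]:
  "C_infinity_on S f \<Longrightarrow> C_infinity_on S (\<lambda>x. f x ^ n)"
  by (induction n) (simp_all add: C_infinity_on_const C_infinity_on_mult)

lemma C_infinity_on_powr [C_infinity_intros]:
  assumes "C_infinity_on S f" "\<And>x. x \<in> S \<Longrightarrow> f x > 0"
  shows "C_infinity_on S (\<lambda>x. f x powr r)"
proof -
  have "C_k_on k S (\<lambda>x. 1 * f x powr r)" for k
    by (rule C_k_on_compose[OF C_k_on_powr]) (use assms in \<open>auto simp: C_infinity_on_def\<close>)
  then show ?thesis
    by (simp add: C_infinity_on_def)
qed

lemma C_infinity_on_subset:
  "C_infinity_on S f \<Longrightarrow> T \<subseteq> S \<Longrightarrow> C_infinity_on T f"
  by (auto simp: C_infinity_on_def intro: C_k_on_subset)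

lemma C_infinity_on_deriv: "open S \<Longrightarrow> C_infinity_on S f \<Longrightarrow> C_infinity_on S (deriv f)"
  by (simp add: C_infinity_on_def C_k_on_deriv)

lemma C_infinity_on_imp_continuous_on:
  "C_infinity_on S f \<Longrightarrow> continuous_on S f"
  by (meson C_infinity_on_def C_k_on_imp_isCont continuous_at_imp_continuous_on)

lemma C_infinity_on_imp_smooth_on:
  assumes "open S" "C_infinity_on S f"
  shows "smooth_on S f"
  unfolding smooth_on_def
proof (intro allI ballI)
  fix n x assume "x \<in> S"
  have "C_k_on (Suc 0) S ((deriv ^^ n) f)"
    using assms C_k_on_higher_deriv[of S n "Suc 0" f] by (simp add: C_infinity_on_def)
  then show "(deriv ^^ n) f differentiable (at x)"
    using \<open>x \<in> S\<close> by (auto simp: real_differentiable_def)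
qed

lemma smooth_on_UNIV_imp_C_infinity_on_higher_deriv:
  "smooth_on UNIV f \<Longrightarrow> C_infinity_on UNIV ((deriv ^^ n) f)"
  by (simp add: C_infinity_on_def smooth_on_UNIV_imp_C_k_on_higher_deriv)

lemma smooth_on_UNIV_continuous_on_higher_deriv:
  "smooth_on UNIV f \<Longrightarrow> continuous_on UNIV ((deriv ^^ n) f)"
  by (intro C_infinity_on_imp_continuous_on smooth_on_UNIV_imp_C_infinity_on_higher_deriv)

section \<open>Hadamard's lemma\<close>

text \<open>The weight \<open>t ^ k\<close> is there because differentiating in \<open>s\<close> raises \<open>k\<close> by one.\<close>

definition hadamard_integral :: "(real \<Rightarrow> real) \<Rightarrow> nat \<Rightarrow> real \<Rightarrow> real \<Rightarrow> real" where
  "hadamard_integral g k a s = integral {0..1} (\<lambda>t. t ^ k * g (a + t * (s - a)))"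

lemma continuous_on_hadamard_integrand:
  fixes g :: "real \<Rightarrow> real"
  assumes "continuous_on UNIV g"
  shows "continuous_on (UNIV \<times> T) (\<lambda>(s, t). t ^ k * g (a + t * (s - a)))"
proof -
  have "continuous_on (UNIV \<times> T) (\<lambda>p. g (a + snd p * (fst p - a)))"
    by (rule continuous_on_compose2[OF assms]) (auto intro!: continuous_intros)
  then show ?thesis
    by (auto simp: case_prod_beta intro!: continuous_intros)
qed

lemma hadamard_integrand_integrable:
  fixes g :: "real \<Rightarrow> real"
  assumes "continuous_on UNIV g"
  shows "(\<lambda>t. t ^ k * g (a + t * (s - a))) integrable_on {0..1}"
proof (rule integrable_continuous_interval)
  have "continuous_on {0..1} (\<lambda>t. g (a + t * (s - a)))"
    by (rule continuous_on_compose2[OF assms]) (auto intro!: continuous_intros)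
  then show "continuous_on {0..1} (\<lambda>t. t ^ k * g (a + t * (s - a)))"
    by (auto intro!: continuous_intros)
qed

lemma hadamard_integral_has_derivative:
  assumes "\<And>s. (g has_real_derivative g' s) (at s)" "continuous_on UNIV g'"
  shows "(hadamard_integral g k a has_real_derivative hadamard_integral g' (Suc k) a s) (at s)"
proof -
  have "continuous_on UNIV g"
    using assms(1) by (meson DERIV_isCont continuous_at_imp_continuous_on)
  have "((\<lambda>s. integral (cbox 0 1) (\<lambda>t. t ^ k * g (a + t * (s - a)))) has_field_derivative
      integral (cbox 0 1) (\<lambda>t. t ^ Suc k * g' (a + t * (s - a)))) (at s within UNIV)"
  proof (rule leibniz_rule_field_derivative)
    fix s t :: real
    have "((\<lambda>s. g (a + t * (s - a))) has_real_derivative g' (a + t * (s - a)) * t) (at s)"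
      by (rule DERIV_chain2[OF assms(1)]) (auto intro!: derivative_eq_intros)
    then show "((\<lambda>s. t ^ k * g (a + t * (s - a))) has_field_derivative
        t ^ Suc k * g' (a + t * (s - a))) (at s within UNIV)"
      by (auto dest: DERIV_cmult[where c="t ^ k"] simp: algebra_simps)
  next
    show "(\<lambda>t. t ^ k * g (a + t * (s - a))) integrable_on cbox 0 1" for s
      using hadamard_integrand_integrable[OF \<open>continuous_on UNIV g\<close>] by simp
  next
    show "continuous_on (UNIV \<times> cbox 0 1) (\<lambda>(s, t). t ^ Suc k * g' (a + t * (s - a)))"
      by (rule continuous_on_hadamard_integrand[OF assms(2)])
  qed auto
  then show ?thesis
    unfolding hadamard_integral_def[abs_def] by simp
qed

lemma C_k_on_hadamard_integral:
  "C_k_on n UNIV g \<Longrightarrow> C_k_on n UNIV (hadamard_integral g k a)"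
proof (induction n arbitrary: g k)
  case 0
  then have "continuous_on UNIV g"
    by (simp add: continuous_at_imp_continuous_on)
  then have "continuous_on UNIV (\<lambda>s. integral (cbox 0 1) (\<lambda>t. t ^ k * g (a + t * (s - a))))"
    by (intro integral_continuous_on_param continuous_on_hadamard_integrand)
  then show ?case
    by (simp add: hadamard_integral_def continuous_on_eq_continuous_at)
next
  case (Suc n)
  then obtain g' where g': "\<forall>s. (g has_real_derivative g' s) (at s)" "C_k_on n UNIV g'"
    by auto
  then have "continuous_on UNIV g'"
    by (meson C_k_on_imp_isCont UNIV_I continuous_at_imp_continuous_on)
  then show ?case
    using g' Suc.IH
    by (intro C_k_onI[where f'="hadamard_integral g' (Suc k) a"] hadamard_integral_has_derivative) auto
qed

lemma C_infinity_on_hadamard_integral: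
  "C_infinity_on UNIV g \<Longrightarrow> C_infinity_on UNIV (hadamard_integral g k a)"
  by (simp add: C_infinity_on_def C_k_on_hadamard_integral)

lemma abs_hadamard_integral_le:
  assumes "continuous_on UNIV g" "\<And>s. \<bar>g s\<bar> \<le> B"
  shows "\<bar>hadamard_integral g k a s\<bar> \<le> B"
proof -
  have "norm (hadamard_integral g k a s) \<le> integral {0..1::real} (\<lambda>_. B)"
    unfolding hadamard_integral_def
  proof (rule integral_norm_bound_integral)
    fix t :: real assume "t \<in> {0..1}"
    then have "\<bar>t ^ k\<bar> * \<bar>g (a + t * (s - a))\<bar> \<le> 1 * B"
      using assms(2) by (intro mult_mono) (auto simp: power_le_one intro: order_trans[OF abs_ge_zero])
    then show "norm (t ^ k * g (a + t * (s - a))) \<le> B"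
      by (simp add: abs_mult)
  qed (auto intro: hadamard_integrand_integrable[OF assms(1)])
  then show ?thesis
    by simp
qed

lemma hadamard_integral_0_same: "hadamard_integral g 0 a a = g a"
  by (simp add: hadamard_integral_def)

lemma hadamard_integral_times_linear:
  "hadamard_integral (\<lambda>r. (r - a) * g r) 0 a s = (s - a) * hadamard_integral g 1 a s"
proof -
  have "(\<lambda>t. t ^ 0 * ((a + t * (s - a) - a) * g (a + t * (s - a))))
      = (\<lambda>t. (s - a) * (t ^ 1 * g (a + t * (s - a))))"
    by (auto simp: algebra_simps)
  then show ?thesis
    by (simp add: hadamard_integral_def)
qed

lemma hadamard_lemma:
  assumes "\<And>s. (f has_real_derivative f' s) (at s)"
  shows "f s - f a = (s - a) * hadamard_integral f' 0 a s"
proof -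
  have "((\<lambda>t. (s - a) * f' (a + t * (s - a))) has_integral
        f (a + 1 * (s - a)) - f (a + 0 * (s - a))) {0..1}"
  proof (rule fundamental_theorem_of_calculus)
    fix t :: real
    have "((\<lambda>t. f (a + t * (s - a))) has_real_derivative f' (a + t * (s - a)) * (s - a)) (at t)"
      by (rule DERIV_chain2[OF assms]) (auto intro!: derivative_eq_intros)
    then show "((\<lambda>t. f (a + t * (s - a))) has_vector_derivative (s - a) * f' (a + t * (s - a)))
        (at t within {0..1})"
      by (auto simp: has_real_derivative_iff_has_vector_derivative[symmetric] mult.commute
          intro: has_field_derivative_at_within)
  qed simp
  then have "((\<lambda>t. (s - a) * f' (a + t * (s - a))) has_integral f s - f a) {0..1}"
    by simp
  then have "integral {0..1} (\<lambda>t. (s - a) * f' (a + t * (s - a))) = f s - f a"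
    by (rule integral_unique)
  then show ?thesis
    by (simp add: hadamard_integral_def)
qed

definition diff_quot :: "(real \<Rightarrow> real) \<Rightarrow> real \<Rightarrow> real \<Rightarrow> real" where
  "diff_quot f a = hadamard_integral (deriv f) 0 a"

context
  fixes f :: "real \<Rightarrow> real"
  assumes smooth: "smooth_on UNIV f"
begin

lemma has_derivative_deriv: "(f has_real_derivative deriv f s) (at s)"
  using smooth_on_UNIV_higher_deriv_has_derivative[OF smooth, of 0] by simp

lemma deriv_has_derivative: "(deriv f has_real_derivative deriv (deriv f) s) (at s)"
  using smooth_on_UNIV_higher_deriv_has_derivative[OF smooth, of "Suc 0"] by simp

lemma diff_quot_eq: "f s - f a = (s - a) * diff_quot f a s"
  unfolding diff_quot_def by (rule hadamard_lemma[OF has_derivative_deriv])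

lemma diff_quot_same: "diff_quot f a a = deriv f a"
  by (simp add: diff_quot_def hadamard_integral_0_same)

lemma C_infinity_on_diff_quot: "C_infinity_on UNIV (diff_quot f a)"
  unfolding diff_quot_def
  using smooth_on_UNIV_imp_C_infinity_on_higher_deriv[OF smooth, of 1]
  by (simp add: C_infinity_on_hadamard_integral)

lemma diff_quot_has_derivative:
  "(diff_quot f a has_real_derivative hadamard_integral (deriv (deriv f)) 1 a s) (at s)"
  unfolding diff_quot_def
  using hadamard_integral_has_derivative[OF deriv_has_derivative, of 0 a s]
    smooth_on_UNIV_continuous_on_higher_deriv[OF smooth, of "Suc (Suc 0)"]
  by simp

lemma abs_diff_quot_le:
  "(\<And>s. \<bar>deriv f s\<bar> \<le> B) \<Longrightarrow> \<bar>diff_quot f a s\<bar> \<le> B"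
  unfolding diff_quot_def
  using smooth_on_UNIV_continuous_on_higher_deriv[OF smooth, of "Suc 0"]
  by (intro abs_hadamard_integral_le) simp_all

lemma abs_diff_quot_derivative_le:
  "(\<And>s. \<bar>deriv (deriv f) s\<bar> \<le> M) \<Longrightarrow> \<bar>hadamard_integral (deriv (deriv f)) 1 a s\<bar> \<le> M"
  using smooth_on_UNIV_continuous_on_higher_deriv[OF smooth, of "Suc (Suc 0)"]
  by (intro abs_hadamard_integral_le) simp_all

lemma abs_diff_quot_sub_deriv_le:
  assumes "\<And>s. \<bar>deriv (deriv f) s\<bar> \<le> M"
  shows "\<bar>diff_quot f a s - deriv f a\<bar> \<le> M * \<bar>s - a\<bar>"
proof -
  have "norm (diff_quot f a s - diff_quot f a a) \<le> M * norm (s - a)"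
  proof (rule field_differentiable_bound[where S=UNIV])
    show "(diff_quot f a has_field_derivative hadamard_integral (deriv (deriv f)) 1 a z)
        (at z within UNIV)" for z
      by (rule diff_quot_has_derivative)
    show "norm (hadamard_integral (deriv (deriv f)) 1 a z) \<le> M" for z
      using abs_diff_quot_derivative_le[OF assms] by simp
  qed auto
  then show ?thesis
    by (simp add: diff_quot_same)
qed

end

section \<open>Periodic functions\<close>

lemma deriv_periodic:
  fixes g :: "real \<Rightarrow> real"
  assumes "\<And>s. g (s + L) = g s"
  shows "deriv g (s + L) = deriv g s"
  unfolding deriv_def DERIV_shift by (simp add: assms)

lemma periodic_continuous_bounded:
  fixes g :: "real \<Rightarrow> real"
  assumes periodic: "\<And>s. g (s + L) = g s" and "L > 0" and "continuous_on UNIV g"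
  obtains B where "\<And>s. \<bar>g s\<bar> \<le> B"
proof -
  interpret periodic_fun_simple g L
    by standard (rule periodic)
  have "bounded (g ` {0..L})"
    by (intro compact_imp_bounded compact_continuous_image continuous_on_subset[OF assms(3)]) auto
  then obtain B where B: "\<forall>s\<in>{0..L}. \<bar>g s\<bar> \<le> B"
    unfolding bounded_iff by auto
  have "\<bar>g s\<bar> \<le> B" for s
  proof -
    define k where "k = \<lfloor>s / L\<rfloor>"
    have "of_int k * L \<le> s" "s < (of_int k + 1) * L"
      using floor_divide_lower[OF \<open>L > 0\<close>] floor_divide_upper[OF \<open>L > 0\<close>]
      unfolding k_def by blast+
    then have "s - of_int k * L \<in> {0..L}"
      by (auto simp: algebra_simps)
    moreover have "g s = g (s - of_int k * L)"
      using plus_of_int[of "s - of_int k * L" k] by simp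
    ultimately show ?thesis
      using B by simp
  qed
  then show ?thesis
    using that by blast
qed

lemma periodic_second_deriv_bounded:
  fixes f :: "real \<Rightarrow> real"
  assumes "smooth_on UNIV f" "\<And>s. f (s + L) = f s" "L > 0"
  obtains B where "\<And>s. \<bar>deriv (deriv f) s\<bar> \<le> B"
proof (rule periodic_continuous_bounded)
  have "deriv f (s + L) = deriv f s" for s
    by (rule deriv_periodic[where g=f, OF assms(2)])
  then show "deriv (deriv f) (s + L) = deriv (deriv f) s" for s
    by (rule deriv_periodic)
  show "continuous_on UNIV (deriv (deriv f))"
    using smooth_on_UNIV_continuous_on_higher_deriv[OF assms(1), of "Suc (Suc 0)"] by simp
qed (use assms(3) that in auto)

section \<open>The Koranyi gauge\<close>

lemma heis_mult_inv_left:
  "heis_mult (heis_inv p) q =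
     (hx q - hx p, hy q - hy p, hu q - hu p - (hx p * hy q - hx q * hy p) / 2)"
  by (simp add: heis_mult_def heis_inv_def hx_def hy_def hu_def field_simps)

definition koranyi_quartic :: "real \<Rightarrow> real \<Rightarrow> real \<Rightarrow> real" where
  "koranyi_quartic x y u = (x\<^sup>2 + y\<^sup>2)\<^sup>2 + 16 * u\<^sup>2"

lemma koranyi_norm_eq: "koranyi_norm (x, y, u) = koranyi_quartic x y u powr (1/4)"
  by (simp add: koranyi_norm_def koranyi_quartic_def hx_def hy_def hu_def)

lemma C_infinity_on_koranyi_quartic [C_infinity_intros]:
  "C_infinity_on S x \<Longrightarrow> C_infinity_on S y \<Longrightarrow> C_infinity_on S u \<Longrightarrow>
    C_infinity_on S (\<lambda>s. koranyi_quartic (x s) (y s) (u s))"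
  unfolding koranyi_quartic_def by (intro C_infinity_intros)

lemma koranyi_norm_dilation:
  "koranyi_norm (t * x, t * y, t\<^sup>2 * u) = \<bar>t\<bar> * koranyi_norm (x, y, u)"
proof -
  have "koranyi_quartic (t * x) (t * y) (t\<^sup>2 * u) = t ^ 4 * koranyi_quartic x y u"
    unfolding koranyi_quartic_def by algebra
  also have "t ^ 4 = \<bar>t\<bar> powr 4"
    by (simp add: power_even_abs)
  finally have "koranyi_quartic (t * x) (t * y) (t\<^sup>2 * u) powr (1/4)
      = (\<bar>t\<bar> powr 4 * koranyi_quartic x y u) powr (1/4)"
    by (simp only:)
  also have "\<dots> = (\<bar>t\<bar> powr 4) powr (1/4) * koranyi_quartic x y u powr (1/4)"
    by (rule powr_mult)
  also have "(\<bar>t\<bar> powr 4) powr (1/4) = \<bar>t\<bar>"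
    by (simp only: powr_powr) simp
  finally show ?thesis
    by (simp add: koranyi_norm_eq)
qed

lemma abs_mult_le_of_abs_le_one:
  fixes p q B :: real
  assumes "\<bar>p\<bar> \<le> 1" "\<bar>q\<bar> \<le> B"
  shows "\<bar>p * q\<bar> \<le> B"
proof -
  have "\<bar>p\<bar> * \<bar>q\<bar> \<le> 1 * B"
    using assms by (intro mult_mono) auto
  then show ?thesis
    by (simp add: abs_mult)
qed

lemma koranyi_quartic_ge_quarter:
  assumes "\<bar>x - p\<bar> \<le> 1/80" "\<bar>y - q\<bar> \<le> 1/80" "p\<^sup>2 + q\<^sup>2 = 1"
  shows "koranyi_quartic x y u \<ge> 1/4"
proof -
  have "p\<^sup>2 \<le> 1" "q\<^sup>2 \<le> 1"
    using assms(3) zero_le_power2[of p] zero_le_power2[of q] by linarith+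
  then have "\<bar>p\<bar> \<le> 1" "\<bar>q\<bar> \<le> 1"
    by (simp_all add: abs_square_le_1)
  have "x\<^sup>2 = p\<^sup>2 + 2 * (p * (x - p)) + (x - p)\<^sup>2" "y\<^sup>2 = q\<^sup>2 + 2 * (q * (y - q)) + (y - q)\<^sup>2"
    by algebra+
  moreover have "\<bar>p * (x - p)\<bar> \<le> 1/80" "\<bar>q * (y - q)\<bar> \<le> 1/80"
    using abs_mult_le_of_abs_le_one[OF \<open>\<bar>p\<bar> \<le> 1\<close> assms(1)]
      abs_mult_le_of_abs_le_one[OF \<open>\<bar>q\<bar> \<le> 1\<close> assms(2)] .
  ultimately have "x\<^sup>2 + y\<^sup>2 \<ge> 1/2"
    using assms(3) zero_le_power2[of "x - p"] zero_le_power2[of "y - q"]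
    unfolding abs_le_iff by linarith
  then have "(x\<^sup>2 + y\<^sup>2)\<^sup>2 \<ge> (1/2)\<^sup>2"
    by (intro power_mono) auto
  moreover have "(1/2 :: real)\<^sup>2 = 1/4"
    by (simp add: power2_eq_square)
  ultimately show ?thesis
    unfolding koranyi_quartic_def using zero_le_power2[of u] by linarith
qed

lemma koranyi_quartic_has_bounded_derivative:
  assumes "(x has_real_derivative x') (at s)" "(y has_real_derivative y') (at s)"
    "(u has_real_derivative u') (at s)"
    and "\<bar>x s\<bar> \<le> 1" "\<bar>y s\<bar> \<le> 1" "\<bar>u s\<bar> \<le> 1" "\<bar>x'\<bar> \<le> M" "\<bar>y'\<bar> \<le> M" "\<bar>u'\<bar> \<le> 2 * M"
  obtains d where "((\<lambda>s. koranyi_quartic (x s) (y s) (u s)) has_real_derivative d) (at s)"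
    "\<bar>d\<bar> \<le> 80 * M"
proof
  let ?r = "x s * x s + y s * y s"
  show "((\<lambda>s. koranyi_quartic (x s) (y s) (u s)) has_real_derivative
      4 * (?r * (x s * x') + ?r * (y s * y')) + 32 * (u s * u')) (at s)"
    unfolding koranyi_quartic_def
    using assms(1-3) by (auto intro!: derivative_eq_intros simp: power2_eq_square algebra_simps)
  have "\<bar>x s * x s\<bar> \<le> 1" "\<bar>y s * y s\<bar> \<le> 1"
    using abs_mult_le_of_abs_le_one[OF assms(4,4)] abs_mult_le_of_abs_le_one[OF assms(5,5)] .
  then have "\<bar>?r\<bar> \<le> 2"
    by linarith
  moreover have "\<bar>x s * x'\<bar> \<le> M" "\<bar>y s * y'\<bar> \<le> M" "\<bar>u s * u'\<bar> \<le> 2 * M"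
    using assms(4-9) by (auto intro: abs_mult_le_of_abs_le_one)
  ultimately have "\<bar>?r * (x s * x')\<bar> \<le> 2 * M" "\<bar>?r * (y s * y')\<bar> \<le> 2 * M"
    by (auto simp: abs_mult intro: mult_mono)
  then have "\<bar>?r * (x s * x') + ?r * (y s * y')\<bar> \<le> 4 * M"
    by arith
  moreover have "\<bar>4 * P + 32 * Q\<bar> \<le> 80 * M" if "\<bar>P\<bar> \<le> 4 * M" "\<bar>Q\<bar> \<le> 2 * M" for P Q :: real
    using that by arith
  ultimately show "\<bar>4 * (?r * (x s * x') + ?r * (y s * y')) + 32 * (u s * u')\<bar> \<le> 80 * M"
    using \<open>\<bar>u s * u'\<bar> \<le> 2 * M\<close> by blast
qed

lemma deriv_root_chord_pos:
  fixes A :: "real \<Rightarrow> real"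
  assumes "(A has_real_derivative A') (at s)" "A s > 0" "(a - s) * A' < 4 * A s"
  shows "deriv (\<lambda>s. (s - a) * A s powr (1/4)) s > 0"
proof -
  have "A s powr (1/4) = A s * A s powr (-3/4)"
    using \<open>A s > 0\<close> by (simp add: powr_mult_base)
  then have "((\<lambda>s. (s - a) * A s powr (1/4)) has_real_derivative
      A s powr (-3/4) * (A s + (s - a) * A' / 4)) (at s)"
    using assms(1,2) by (auto intro!: derivative_eq_intros simp: field_simps)
  moreover have "A s powr (-3/4) * (A s + (s - a) * A' / 4) > 0"
    using assms(2,3) by (intro mult_pos_pos) (auto simp: field_simps)
  ultimately show ?thesis
    by (simp add: DERIV_imp_deriv)
qed

section \<open>Unit-speed Legendrian curves\<close>

locale unit_speed_legendrian_curve =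
  fixes \<gamma> :: "real \<Rightarrow> heis" and M :: real
  assumes smooth: "smooth_curve \<gamma>"
    and horizontal: "\<And>s. deriv (\<lambda>t. hu (\<gamma> t)) s =
      (hx (\<gamma> s) * deriv (\<lambda>t. hy (\<gamma> t)) s - deriv (\<lambda>t. hx (\<gamma> t)) s * hy (\<gamma> s)) / 2"
    and unit_speed: "\<And>s. (deriv (\<lambda>t. hx (\<gamma> t)) s)\<^sup>2 + (deriv (\<lambda>t. hy (\<gamma> t)) s)\<^sup>2 = 1"
    and curvature_bound_x: "\<And>s. \<bar>deriv (deriv (\<lambda>t. hx (\<gamma> t))) s\<bar> \<le> M"
    and curvature_bound_y: "\<And>s. \<bar>deriv (deriv (\<lambda>t. hy (\<gamma> t))) s\<bar> \<le> M"
    and M_pos: "M > 0"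
begin

abbreviation X :: "real \<Rightarrow> real" where "X \<equiv> \<lambda>t. hx (\<gamma> t)"
abbreviation Y :: "real \<Rightarrow> real" where "Y \<equiv> \<lambda>t. hy (\<gamma> t)"
abbreviation U :: "real \<Rightarrow> real" where "U \<equiv> \<lambda>t. hu (\<gamma> t)"

lemma smooth_X: "smooth_on UNIV X" and smooth_Y: "smooth_on UNIV Y" and smooth_U: "smooth_on UNIV U"
  using smooth by (simp_all add: smooth_curve_def)

lemma C_infinity_on_X: "C_infinity_on UNIV X" and C_infinity_on_Y: "C_infinity_on UNIV Y"
  using smooth_on_UNIV_imp_C_infinity_on_higher_deriv[OF smooth_X, of 0]
    smooth_on_UNIV_imp_C_infinity_on_higher_deriv[OF smooth_Y, of 0] by simp_all

lemma abs_deriv_X_le: "\<bar>deriv X s\<bar> \<le> 1" and abs_deriv_Y_le: "\<bar>deriv Y s\<bar> \<le> 1"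
proof -
  have "(deriv X s)\<^sup>2 \<le> 1" "(deriv Y s)\<^sup>2 \<le> 1"
    using unit_speed[of s] zero_le_power2[of "deriv X s"] zero_le_power2[of "deriv Y s"] by linarith+
  then show "\<bar>deriv X s\<bar> \<le> 1" "\<bar>deriv Y s\<bar> \<le> 1"
    by (simp_all add: abs_square_le_1)
qed

lemma U_has_derivative: "(U has_real_derivative (X s * deriv Y s - deriv X s * Y s) / 2) (at s)"
  using has_derivative_deriv[OF smooth_U, of s] horizontal[of s] by simp

text \<open>By horizontality the vertical coordinate of \<open>\<gamma> a\<inverse> \<cdot> \<gamma> s\<close> has derivative
  \<open>(s - a) * vertical_rate a s\<close>, so it vanishes to second order at \<open>a\<close>.\<close>

definition vertical_rate :: "real \<Rightarrow> real \<Rightarrow> real" where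
  "vertical_rate a s = (diff_quot X a s * deriv Y s - deriv X s * diff_quot Y a s) / 2"

definition vertical_quot :: "real \<Rightarrow> real \<Rightarrow> real" where
  "vertical_quot a = hadamard_integral (vertical_rate a) 1 a"

lemma left_translate_eq:
  "heis_mult (heis_inv (\<gamma> a)) (\<gamma> s) =
     ((s - a) * diff_quot X a s, (s - a) * diff_quot Y a s, (s - a)\<^sup>2 * vertical_quot a s)"
proof -
  define V where "V s = U s - U a - (X a * Y s - X s * Y a) / 2" for s
  have "(V has_real_derivative (s - a) * vertical_rate a s) (at s)" for s
  proof -
    have "(V has_real_derivative
        ((X s - X a) * deriv Y s - deriv X s * (Y s - Y a)) / 2) (at s)"
      unfolding V_def
      by (auto intro!: derivative_eq_intros U_has_derivative has_derivative_deriv smooth_X smooth_Y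
          simp: field_simps)
    then show ?thesis
      unfolding diff_quot_eq[OF smooth_X] diff_quot_eq[OF smooth_Y] vertical_rate_def
      by (simp add: algebra_simps)
  qed
  then have "V s - V a = (s - a) * hadamard_integral (\<lambda>r. (r - a) * vertical_rate a r) 0 a s"
    by (rule hadamard_lemma)
  then have "V s = (s - a)\<^sup>2 * vertical_quot a s"
    by (simp add: V_def vertical_quot_def hadamard_integral_times_linear power2_eq_square)
  then show ?thesis
    by (simp add: heis_mult_inv_left V_def diff_quot_eq[OF smooth_X] diff_quot_eq[OF smooth_Y])
qed

lemma C_infinity_on_vertical_rate: "C_infinity_on UNIV (vertical_rate a)"
  unfolding vertical_rate_def
  by (intro C_infinity_intros C_infinity_on_diff_quot C_infinity_on_deriv smooth_X smooth_Y
      C_infinity_on_X C_infinity_on_Y open_UNIV)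

lemma C_infinity_on_vertical_quot: "C_infinity_on UNIV (vertical_quot a)"
  unfolding vertical_quot_def by (intro C_infinity_on_hadamard_integral C_infinity_on_vertical_rate)

lemma abs_vertical_rate_le: "\<bar>vertical_rate a s\<bar> \<le> 1"
proof -
  have "\<bar>diff_quot X a s * deriv Y s\<bar> \<le> 1" "\<bar>deriv X s * diff_quot Y a s\<bar> \<le> 1"
    by (intro abs_mult_le_of_abs_le_one abs_diff_quot_le smooth_X smooth_Y abs_deriv_X_le
        abs_deriv_Y_le)+
  then show ?thesis
    by (simp add: vertical_rate_def)
qed

lemma abs_vertical_quot_le: "\<bar>vertical_quot a s\<bar> \<le> 1"
  unfolding vertical_quot_def
  by (intro abs_hadamard_integral_le abs_vertical_rate_le C_infinity_on_imp_continuous_on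
      C_infinity_on_vertical_rate)

lemma vertical_quot_has_bounded_derivative:
  obtains d where "(vertical_quot a has_real_derivative d) (at s)" "\<bar>d\<bar> \<le> 2 * M"
proof -
  define quot_x' quot_y' where "quot_x' = hadamard_integral (deriv (deriv X)) 1 a"
    and "quot_y' = hadamard_integral (deriv (deriv Y)) 1 a"
  define rate' where "rate' s = (quot_x' s * deriv Y s + diff_quot X a s * deriv (deriv Y) s
      - deriv (deriv X) s * diff_quot Y a s - deriv X s * quot_y' s) / 2" for s
  have "(vertical_rate a has_real_derivative rate' s) (at s)" for s
    unfolding vertical_rate_def rate'_def quot_x'_def quot_y'_def
    by (auto intro!: derivative_eq_intros diff_quot_has_derivative deriv_has_derivative
        smooth_X smooth_Y simp: field_simps)
  moreover have "continuous_on UNIV rate'"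
    unfolding rate'_def quot_x'_def quot_y'_def
    by (intro C_infinity_on_imp_continuous_on C_infinity_intros C_infinity_on_hadamard_integral
        C_infinity_on_diff_quot C_infinity_on_deriv smooth_X smooth_Y C_infinity_on_X
        C_infinity_on_Y open_UNIV)
  moreover have "\<bar>rate' s\<bar> \<le> 2 * M" for s
  proof -
    have "\<bar>quot_x' s\<bar> \<le> M" "\<bar>quot_y' s\<bar> \<le> M"
      unfolding quot_x'_def quot_y'_def
      by (intro abs_diff_quot_derivative_le smooth_X smooth_Y curvature_bound_x curvature_bound_y)+
    moreover have "\<bar>diff_quot X a s\<bar> \<le> 1" "\<bar>diff_quot Y a s\<bar> \<le> 1"
      by (intro abs_diff_quot_le smooth_X smooth_Y abs_deriv_X_le abs_deriv_Y_le)+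
    ultimately have "\<bar>deriv Y s * quot_x' s\<bar> \<le> M" "\<bar>diff_quot X a s * deriv (deriv Y) s\<bar> \<le> M"
      "\<bar>diff_quot Y a s * deriv (deriv X) s\<bar> \<le> M" "\<bar>deriv X s * quot_y' s\<bar> \<le> M"
      using abs_deriv_X_le abs_deriv_Y_le curvature_bound_x curvature_bound_y
      by (blast intro: abs_mult_le_of_abs_le_one)+
    then show ?thesis
      unfolding rate'_def by (simp add: mult.commute)
  qed
  ultimately show ?thesis
    using hadamard_integral_has_derivative[of "vertical_rate a" rate' 1 a s]
      abs_hadamard_integral_le[of rate' "2 * M" "Suc 1" a s]
    by (intro that[of "hadamard_integral rate' (Suc 1) a s"]) (simp_all add: vertical_quot_def)
qed

definition chord_quartic :: "real \<Rightarrow> real \<Rightarrow> real" where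
  "chord_quartic a s = koranyi_quartic (diff_quot X a s) (diff_quot Y a s) (vertical_quot a s)"

lemma chord_H_eq: "chord_H \<gamma> a = (\<lambda>s. (s - a) * chord_quartic a s powr (1/4))"
proof
  show "chord_H \<gamma> a s = (s - a) * chord_quartic a s powr (1/4)" for s
    unfolding chord_H_def koranyi_dist_def left_translate_eq koranyi_norm_dilation
    unfolding koranyi_norm_eq chord_quartic_def by (auto simp: algebra_simps)
qed

lemma C_infinity_on_chord_quartic: "C_infinity_on UNIV (chord_quartic a)"
  unfolding chord_quartic_def
  by (intro C_infinity_intros C_infinity_on_diff_quot C_infinity_on_vertical_quot smooth_X smooth_Y)

lemma chord_quartic_ge_quarter:
  assumes "s \<in> ball a (1 / (80 * M))"
  shows "chord_quartic a s \<ge> 1/4"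
proof -
  have "M * \<bar>s - a\<bar> \<le> 1/80"
    using assms M_pos by (simp add: dist_real_def field_simps abs_minus_commute)
  then show ?thesis
    unfolding chord_quartic_def
    using abs_diff_quot_sub_deriv_le[OF smooth_X curvature_bound_x, of a s]
      abs_diff_quot_sub_deriv_le[OF smooth_Y curvature_bound_y, of a s]
    by (intro koranyi_quartic_ge_quarter[OF _ _ unit_speed[of a]]) (simp_all add: mult.commute)
qed

lemma chord_quartic_has_bounded_derivative:
  obtains d where "(chord_quartic a has_real_derivative d) (at s)" "\<bar>d\<bar> \<le> 80 * M"
proof -
  obtain du where du: "(vertical_quot a has_real_derivative du) (at s)" "\<bar>du\<bar> \<le> 2 * M"
    by (rule vertical_quot_has_bounded_derivative)
  obtain d where "((\<lambda>s. koranyi_quartic (diff_quot X a s) (diff_quot Y a s) (vertical_quot a s))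
      has_real_derivative d) (at s)" "\<bar>d\<bar> \<le> 80 * M"
    by (rule koranyi_quartic_has_bounded_derivative[OF diff_quot_has_derivative[OF smooth_X]
          diff_quot_has_derivative[OF smooth_Y] du(1) _ _ abs_vertical_quot_le _ _ du(2)])
       (intro abs_diff_quot_le abs_diff_quot_derivative_le smooth_X smooth_Y abs_deriv_X_le
         abs_deriv_Y_le curvature_bound_x curvature_bound_y)+
  then show ?thesis
    using that unfolding chord_quartic_def[abs_def] by blast
qed

theorem chord_H_smooth_increasing:
  defines "\<delta> \<equiv> 1 / (80 * M)"
  shows "smooth_on (ball a \<delta>) (chord_H \<gamma> a)"
    and "s \<in> ball a \<delta> \<Longrightarrow> deriv (chord_H \<gamma> a) s > 0"
proof -
  have pos: "chord_quartic a s > 0" if "s \<in> ball a \<delta>" for s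
    using chord_quartic_ge_quarter[of s a] that by (simp add: \<delta>_def)
  have "C_infinity_on (ball a \<delta>) (chord_quartic a)"
    by (rule C_infinity_on_subset[OF C_infinity_on_chord_quartic]) simp
  then have "C_infinity_on (ball a \<delta>) (\<lambda>s. (s - a) * chord_quartic a s powr (1/4))"
    using pos by (intro C_infinity_intros)
  then show "smooth_on (ball a \<delta>) (chord_H \<gamma> a)"
    unfolding chord_H_eq by (rule C_infinity_on_imp_smooth_on[OF open_ball])
  assume s: "s \<in> ball a \<delta>"
  obtain d where d: "(chord_quartic a has_real_derivative d) (at s)" "\<bar>d\<bar> \<le> 80 * M"
    by (rule chord_quartic_has_bounded_derivative)
  have "(a - s) * d \<le> \<bar>s - a\<bar> * \<bar>d\<bar>"
    by (metis abs_ge_self abs_minus_commute abs_mult)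
  also have "\<dots> \<le> \<bar>s - a\<bar> * (80 * M)"
    using d(2) by (simp add: mult_left_mono)
  also have "\<dots> < 1"
    using s M_pos by (simp add: \<delta>_def dist_real_def field_simps abs_minus_commute)
  also have "1 \<le> 4 * chord_quartic a s"
    using chord_quartic_ge_quarter[of s a] s by (simp add: \<delta>_def)
  finally show "deriv (chord_H \<gamma> a) s > 0"
    unfolding chord_H_eq using d(1) pos[OF s] by (intro deriv_root_chord_pos)
qed

end

theorem lemma2p2:
  fixes \<gamma> :: "real \<Rightarrow> heis" and L :: real
  assumes "legendrian_knot_param \<gamma> L"
  shows "\<exists>\<delta>>0. \<forall>s0::real.
           smooth_on (ball s0 \<delta>) (chord_H \<gamma> s0) \<and>
           (\<forall>s\<in>ball s0 \<delta>. deriv (chord_H \<gamma> s0) s > 0)"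
proof -
  have L: "L > 0" and smooth: "smooth_curve \<gamma>" and periodic: "\<And>s. \<gamma> (s + L) = \<gamma> s"
    using assms by (auto simp: legendrian_knot_param_def)
  obtain Bx where Bx: "\<And>s. \<bar>deriv (deriv (\<lambda>t. hx (\<gamma> t))) s\<bar> \<le> Bx"
    by (rule periodic_second_deriv_bounded[of "\<lambda>t. hx (\<gamma> t)" L])
       (use smooth periodic L in \<open>auto simp: smooth_curve_def\<close>)
  obtain By where By: "\<And>s. \<bar>deriv (deriv (\<lambda>t. hy (\<gamma> t))) s\<bar> \<le> By"
    by (rule periodic_second_deriv_bounded[of "\<lambda>t. hy (\<gamma> t)" L])
       (use smooth periodic L in \<open>auto simp: smooth_curve_def\<close>)
  define M where "M = max 1 (max Bx By)"
  interpret unit_speed_legendrian_curve \<gamma> M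
  proof
    show "\<bar>deriv (deriv (\<lambda>t. hx (\<gamma> t))) s\<bar> \<le> M" "\<bar>deriv (deriv (\<lambda>t. hy (\<gamma> t))) s\<bar> \<le> M" for s
      using Bx[of s] By[of s] by (simp_all add: M_def le_max_iff_disj)
  qed (use assms in \<open>auto simp: legendrian_knot_param_def M_def\<close>)
  have "1 / (80 * M) > 0"
    using M_pos by simp
  then show ?thesis
    using chord_H_smooth_increasing by blast
qed

end
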